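(* Assume A1, A2, A3(D), $\beta\in[0,1)$ and $0<\eta<2N/(\sigma_{\max}^2H_{s_0})$, where $s_0=\ell^{-1}(N\mathcal{L}(w(1)))$. Let $C_1=\frac{\sigma_{\max}^2H_{s_0}}{2N}\eta\in(0,1)$. Let $w(t)$ be the GDM iterates, with the convention $w(0)=w(1)$, and define $$\xi(t)=\mathcal{L}(w(t))+\frac{\beta}{2\eta(1-\beta)}\|w(t)-w(t-1)\|^2.$$ Then for every $t\ge1$ and every $\alpha\in[0,1]$, writing $w(t+\alpha)=w(t)+\alpha(w(t+1)-w(t))$, $$\xi(t)\ge\mathcal{L}(w(t+\alpha))+\frac{\beta\alpha^2}{2\eta(1-\beta)}\|w(t+1)-w(t)\|^2+\frac{(1-C_1)\alpha^2}{\eta}\|w(t+1)-w(t)\|^2.$$ In particular, $\xi(t)\ge\xi(t+1)+\frac{1-C_1}{\eta}\|w(t+1)-w(t)\|^2$ for all $t\ge1$.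
   Context: Setting. The data are $S=\{x_1,\dots,x_N\}\subset\mathbb{R}^d$, with labels absorbed. The empirical loss is $\mathcal{L}(w)=\frac1N\sum_i\ell(\langle w,x_i\rangle)$. $\sigma_{\max}$ is the spectral norm of $(x_1,\dots,x_N)$. A1: there is $w$ with $\langle w,x_i\rangle>0$ for all $i$. A2: $\ell$ is differentiable, $\ell'<0$, $\ell(x),\ell'(x)\to0$ as $x\to\infty$, and $\limsup_{x\to-\infty}\ell'(x)<0$. There are positive $\mu_\pm,x_\pm$ with $-\ell'(x)\le(1+e^{-\mu_+x})e^{-x}$ for $x>x_+$ and $-\ell'(x)\ge(1-e^{-\mu_-x})e^{-x}$ for $x>x_-$. $\ell^{-1}$ is the inverse of the bijection $\ell:\mathbb{R}\to(0,\infty)$. A3(D): $H_{s_0}$ is the smallest constant with $|\ell'(x)-\ell'(y)|\le H_{s_0}|x-y|$ for $x,y\ge s_0$ (finite for every $s_0$). GDM: $m(0)=0$, $m(t)=\beta m(t-1)+(1-\beta)\nabla\mathcal{L}(w(t))$, $w(t+1)=w(t)-\eta m(t)$ for $t\ge1$. *)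

theory Defs
  imports "HOL-Analysis.Analysis"
begin

definition emp_loss :: "(real \<Rightarrow> real) \<Rightarrow> (nat \<Rightarrow> 'a::euclidean_space) \<Rightarrow> nat \<Rightarrow> 'a \<Rightarrow> real" where
  "emp_loss l x N w = (1 / real N) * (\<Sum>i<N. l (inner w (x i)))"

definition gradient :: "('a::real_inner \<Rightarrow> real) \<Rightarrow> 'a \<Rightarrow> 'a" where
  "gradient f v = (THE D. GDERIV f v :> D)"

text \<open>Spectral norm (operator 2-norm) of the d x N matrix with columns x_0, ..., x_{N-1}.\<close>
definition sigma_max :: "(nat \<Rightarrow> 'a::euclidean_space) \<Rightarrow> nat \<Rightarrow> real" where
  "sigma_max x N = Sup {norm (\<Sum>i<N. v i *\<^sub>R x i) | v. (\<Sum>i<N. (v i)\<^sup>2) = 1}"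

definition lip_const :: "(real \<Rightarrow> real) \<Rightarrow> real \<Rightarrow> real" where
  "lip_const l s0 = Inf {H. \<forall>a b. a \<ge> s0 \<longrightarrow> b \<ge> s0 \<longrightarrow> \<bar>deriv l a - deriv l b\<bar> \<le> H * \<bar>a - b\<bar>}"

end

theory Submission
  imports Defs
begin

(* GDM is the heavy-ball iteration w(t+1) - w(t) = beta (w(t) - w(t-1)) - eta (1 - beta) grad L(w(t)).
   While all margins of both endpoints of a step are at least s0, l' is H-Lipschitz between them and L
   satisfies the descent lemma with constant sigma_max^2 H / N; inserting the heavy-ball identity and
   completing the square in w(t) - w(t-1) yields the energy inequality.
   The margin condition propagates by induction: xi(t) never exceeds L(w(1)), and since l is
   decreasing with l(s0) = N L(w(1)), every point v with L(v) <= L(w(1)) has all margins at least s0.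
   Within one step, the strict energy decrease shows that the segment cannot touch the level s0 from
   above before alpha = 1. *)

lemma deriv_lipschitz_quadratic_upper_bound:
  fixes f :: "real \<Rightarrow> real"
  assumes f_diff: "\<And>s. f differentiable (at s)"
    and lip: "\<And>a b. s0 \<le> a \<Longrightarrow> s0 \<le> b \<Longrightarrow> \<bar>deriv f a - deriv f b\<bar> \<le> H * \<bar>a - b\<bar>"
    and a: "s0 \<le> a" and y: "s0 \<le> y"
  shows "f y \<le> f a + deriv f a * (y - a) + H / 2 * (y - a)\<^sup>2"
proof -
  define g where "g z = f z - f a - deriv f a * (z - a) - H / 2 * (z - a)\<^sup>2" for z
  have dg: "DERIV g z :> deriv f z - deriv f a - H * (z - a)" for z
  proof -
    have "DERIV f z :> deriv f z"
      using f_diff DERIV_deriv_iff_real_differentiable by blast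
    then show ?thesis unfolding g_def
      by (auto intro!: derivative_eq_intros simp: algebra_simps power2_eq_square)
  qed
  have "g y \<le> g a"
  proof (cases "y \<le> a")
    case True
    then show ?thesis
    proof (rule DERIV_nonneg_imp_nondecreasing, intro exI conjI)
      fix z assume "y \<le> z" "z \<le> a"
      then show "deriv f z - deriv f a - H * (z - a) \<ge> 0"
        using lip[of z a] a y by (auto simp: abs_le_iff algebra_simps)
    qed (rule dg)
  next
    case False
    then have "a \<le> y" by simp
    then show ?thesis
    proof (rule DERIV_nonpos_imp_nonincreasing, intro exI conjI)
      fix z assume "a \<le> z" "z \<le> y"
      then show "deriv f z - deriv f a - H * (z - a) \<le> 0"
        using lip[of z a] a y by (auto simp: abs_le_iff algebra_simps)
    qed (rule dg)
  qed
  then show ?thesis by (simp add: g_def)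
qed

lemma sigma_max_bdd_above:
  fixes x :: "nat \<Rightarrow> 'a::real_normed_vector"
  shows "bdd_above {norm (\<Sum>i<N. v i *\<^sub>R x i) | v. (\<Sum>i<N. (v i)\<^sup>2) = 1}"
proof (rule bdd_aboveI)
  fix z assume "z \<in> {norm (\<Sum>i<N. v i *\<^sub>R x i) | v. (\<Sum>i<N. (v i)\<^sup>2) = 1}"
  then obtain u where z: "z = norm (\<Sum>i<N. u i *\<^sub>R x i)" and u: "(\<Sum>i<N. (u i)\<^sup>2) = 1"
    by blast
  have "norm (u i *\<^sub>R x i) \<le> norm (x i)" if "i < N" for i
  proof -
    have "(u i)\<^sup>2 \<le> (\<Sum>i<N. (u i)\<^sup>2)"
      by (rule member_le_sum) (use that in auto)
    then have "\<bar>u i\<bar> \<le> 1"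
      using u abs_le_square_iff[of "u i" 1] by simp
    then show ?thesis
      by (simp add: mult_left_le_one_le)
  qed
  then have "(\<Sum>i<N. norm (u i *\<^sub>R x i)) \<le> (\<Sum>i<N. norm (x i))"
    by (intro sum_mono) auto
  then show "z \<le> (\<Sum>i<N. norm (x i))"
    using z norm_sum[of "\<lambda>i. u i *\<^sub>R x i" "{..<N}"] by linarith
qed

lemma sum_inner_square_le_sigma_max:
  fixes x :: "nat \<Rightarrow> 'a::euclidean_space"
  shows "(\<Sum>i<N. (inner d (x i))\<^sup>2) \<le> (sigma_max x N)\<^sup>2 * (norm d)\<^sup>2"
proof -
  define r where "r = sqrt (\<Sum>i<N. (inner d (x i))\<^sup>2)"
  have r_sq: "r\<^sup>2 = (\<Sum>i<N. (inner d (x i))\<^sup>2)"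
    by (simp add: r_def sum_nonneg)
  show ?thesis
  proof (cases "r = 0")
    case True
    then show ?thesis using r_sq by simp
  next
    case False
    then have r_pos: "0 < r"
      by (simp add: r_def sum_nonneg order_less_le)
    define v where "v i = inner d (x i) / r" for i
    have "(\<Sum>i<N. (v i)\<^sup>2) = 1"
      using r_pos by (simp add: v_def power_divide flip: sum_divide_distrib r_sq)
    then have v_le: "norm (\<Sum>i<N. v i *\<^sub>R x i) \<le> sigma_max x N"
      unfolding sigma_max_def by (intro cSup_upper[OF _ sigma_max_bdd_above]) blast
    have "inner d (\<Sum>i<N. v i *\<^sub>R x i) = r\<^sup>2 / r"
      unfolding r_sq by (simp add: inner_sum_right v_def power2_eq_square sum_divide_distrib)
    then have "r = inner d (\<Sum>i<N. v i *\<^sub>R x i)"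
      using r_pos by (simp add: power2_eq_square)
    also have "\<dots> \<le> norm d * norm (\<Sum>i<N. v i *\<^sub>R x i)"
      by (rule norm_cauchy_schwarz)
    also have "\<dots> \<le> norm d * sigma_max x N"
      by (rule mult_left_mono[OF v_le]) simp
    finally have "r\<^sup>2 \<le> (norm d * sigma_max x N)\<^sup>2"
      using r_pos by (intro power_mono) auto
    then show ?thesis
      using r_sq by (simp add: power_mult_distrib mult.commute)
  qed
qed

lemma lip_const_nonneg:
  assumes "\<exists>H. \<forall>a b. s0 \<le> a \<longrightarrow> s0 \<le> b \<longrightarrow> \<bar>deriv l a - deriv l b\<bar> \<le> H * \<bar>a - b\<bar>"
  shows "0 \<le> lip_const l s0"
  unfolding lip_const_def
proof (rule cInf_greatest)
  fix H
  assume "H \<in> {H. \<forall>a b. s0 \<le> a \<longrightarrow> s0 \<le> b \<longrightarrow> \<bar>deriv l a - deriv l b\<bar> \<le> H * \<bar>a - b\<bar>}"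
  then have "\<forall>a b. s0 \<le> a \<longrightarrow> s0 \<le> b \<longrightarrow> \<bar>deriv l a - deriv l b\<bar> \<le> H * \<bar>a - b\<bar>"
    by simp
  from this[rule_format, of "s0 + 1" s0] have "\<bar>deriv l (s0 + 1) - deriv l s0\<bar> \<le> H"
    by simp
  then show "0 \<le> H" by linarith
qed (use assms in auto)

lemma lip_const_lipschitz:
  assumes "\<exists>H. \<forall>a b. s0 \<le> a \<longrightarrow> s0 \<le> b \<longrightarrow> \<bar>deriv l a - deriv l b\<bar> \<le> H * \<bar>a - b\<bar>"
    and "s0 \<le> a" "s0 \<le> b"
  shows "\<bar>deriv l a - deriv l b\<bar> \<le> lip_const l s0 * \<bar>a - b\<bar>"
proof (cases "a = b")
  case False
  then have ab: "0 < \<bar>a - b\<bar>" by simp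
  have "\<bar>deriv l a - deriv l b\<bar> / \<bar>a - b\<bar> \<le> lip_const l s0"
    unfolding lip_const_def
  proof (rule cInf_greatest)
    fix H
    assume "H \<in> {H. \<forall>a b. s0 \<le> a \<longrightarrow> s0 \<le> b \<longrightarrow> \<bar>deriv l a - deriv l b\<bar> \<le> H * \<bar>a - b\<bar>}"
    then show "\<bar>deriv l a - deriv l b\<bar> / \<bar>a - b\<bar> \<le> H"
      using assms(2,3) ab by (simp add: divide_le_eq)
  qed (use assms(1) in auto)
  then show ?thesis using ab by (simp add: divide_le_eq)
qed simp

lemma gradient_eqI:
  fixes f :: "'a::real_inner \<Rightarrow> real"
  assumes "GDERIV f v :> D"
  shows "gradient f v = D"
  unfolding gradient_def
proof (rule the_equality)
  fix D' assume "GDERIV f v :> D'"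
  with assms have "(\<lambda>h. inner h D') = (\<lambda>h. inner h D)"
    unfolding gderiv_def using has_derivative_unique by blast
  from fun_cong[OF this, of "D' - D"] have "inner (D' - D) D' = inner (D' - D) D"
    by simp
  then have "inner (D' - D) (D' - D) = 0"
    by (simp add: inner_diff_right)
  then show "D' = D" by simp
qed (rule assms)

lemma gradient_emp_loss:
  fixes x :: "nat \<Rightarrow> 'a::euclidean_space"
  assumes l_diff: "\<And>s. l differentiable (at s)"
  shows "gradient (emp_loss l x N) v = (1 / real N) *\<^sub>R (\<Sum>i<N. deriv l (inner v (x i)) *\<^sub>R x i)"
proof (rule gradient_eqI)
  have "GDERIV (\<lambda>v. inner v (x i)) v :> x i" for i
    unfolding gderiv_def by (auto intro!: derivative_eq_intros)
  moreover have "DERIV l s :> deriv l s" for s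
    using l_diff DERIV_deriv_iff_real_differentiable by blast
  ultimately have "GDERIV (\<lambda>v. l (inner v (x i))) v :> deriv l (inner v (x i)) *\<^sub>R x i" for i
    by (rule GDERIV_DERIV_compose)
  then have "((\<lambda>v. (1 / real N) * (\<Sum>i<N. l (inner v (x i)))) has_derivative
      (\<lambda>h. (1 / real N) * (\<Sum>i<N. inner h (deriv l (inner v (x i)) *\<^sub>R x i)))) (at v)"
    unfolding gderiv_def by (intro has_derivative_mult_right has_derivative_sum)
  then show "GDERIV (emp_loss l x N) v :> (1 / real N) *\<^sub>R (\<Sum>i<N. deriv l (inner v (x i)) *\<^sub>R x i)"
    unfolding gderiv_def emp_loss_def[abs_def] by (simp add: inner_sum_right)
qed

lemma emp_loss_term_le:
  assumes l_nonneg: "\<And>s. 0 \<le> l s" and i: "i < N"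
  shows "l (inner v (x i)) \<le> real N * emp_loss l x N v"
proof -
  have "l (inner v (x i)) \<le> (\<Sum>j<N. l (inner v (x j)))"
    by (rule member_le_sum) (use i l_nonneg in auto)
  then show ?thesis
    using i by (simp add: emp_loss_def)
qed

lemma inner_gradient_emp_loss_nonpos:
  fixes x :: "nat \<Rightarrow> 'a::euclidean_space"
  assumes l_diff: "\<And>s. l differentiable (at s)"
    and l_pos: "\<And>s. 0 < l s" and deriv_l_nonpos: "\<And>s. deriv l s \<le> 0"
    and i: "i < N" and dominant: "real N * emp_loss l x N v \<le> l (inner v (x i))"
  shows "inner (gradient (emp_loss l x N) v) (x i) \<le> 0"
proof -
  have "{..<N} = {i}"
  proof (rule ccontr)
    assume "{..<N} \<noteq> {i}"
    then obtain j where j: "j < N" "j \<noteq> i"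
      using i by auto
    then have "(\<Sum>k\<in>{i, j}. l (inner v (x k))) \<le> (\<Sum>k<N. l (inner v (x k)))"
      using i by (intro sum_mono2) (auto intro: less_imp_le l_pos)
    also have "\<dots> = real N * emp_loss l x N v"
      using i by (simp add: emp_loss_def)
    finally show False
      using dominant l_pos[of "inner v (x j)"] j by simp
  qed
  then show ?thesis
    unfolding gradient_emp_loss[OF l_diff]
    using deriv_l_nonpos[of "inner v (x i)"] by (simp add: divide_nonpos_nonneg mult_nonpos_nonneg)
qed

lemma emp_loss_descent:
  fixes x :: "nat \<Rightarrow> 'a::euclidean_space"
  assumes l_diff: "\<And>s. l differentiable (at s)"
    and lip: "\<And>a b. s0 \<le> a \<Longrightarrow> s0 \<le> b \<Longrightarrow> \<bar>deriv l a - deriv l b\<bar> \<le> H * \<bar>a - b\<bar>"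
    and H: "0 \<le> H"
    and p: "\<And>i. i < N \<Longrightarrow> s0 \<le> inner p (x i)"
    and q: "\<And>i. i < N \<Longrightarrow> s0 \<le> inner q (x i)"
  shows "emp_loss l x N q \<le> emp_loss l x N p + inner (gradient (emp_loss l x N) p) (q - p)
           + (sigma_max x N)\<^sup>2 * H / (2 * real N) * (norm (q - p))\<^sup>2"
proof -
  let ?a = "\<lambda>i. inner p (x i)" and ?b = "\<lambda>i. inner (q - p) (x i)"
  have "(\<Sum>i<N. l (inner q (x i)))
      \<le> (\<Sum>i<N. l (?a i) + deriv l (?a i) * ?b i + H / 2 * (?b i)\<^sup>2)"
    using deriv_lipschitz_quadratic_upper_bound[OF l_diff lip p q]
    by (intro sum_mono) (simp add: inner_diff_left)
  also have "\<dots> = (\<Sum>i<N. l (?a i)) + (\<Sum>i<N. deriv l (?a i) * ?b i) + H / 2 * (\<Sum>i<N. (?b i)\<^sup>2)"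
    by (simp add: sum.distrib sum_distrib_left)
  also have "\<dots> \<le> (\<Sum>i<N. l (?a i)) + (\<Sum>i<N. deriv l (?a i) * ?b i)
      + H / 2 * ((sigma_max x N)\<^sup>2 * (norm (q - p))\<^sup>2)"
    using H by (simp add: mult_left_mono sum_inner_square_le_sigma_max)
  finally have sums: "(\<Sum>i<N. l (inner q (x i))) \<le> \<dots>" .
  have "inner (gradient (emp_loss l x N) p) (q - p) = (\<Sum>i<N. deriv l (?a i) * ?b i) / real N"
    by (simp add: gradient_emp_loss[OF l_diff] inner_sum_left sum_divide_distrib)
      (simp add: inner_commute)
  then show ?thesis
    using divide_right_mono[OF sums, of "real N"]
    by (simp add: emp_loss_def add_divide_distrib algebra_simps)
qed

lemma momentum_step_energy_bound:
  fixes e d G :: "'a::real_inner"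
  assumes beta: "0 \<le> \<beta>" "\<beta> < 1" and eta: "0 < \<eta>" and alpha: "0 \<le> \<alpha>" "\<alpha> \<le> 1"
    and step: "d = \<beta> *\<^sub>R e - (\<eta> * (1 - \<beta>)) *\<^sub>R G"
    and descent: "Lq \<le> Lp + \<alpha> * inner G d + C * \<alpha>\<^sup>2 / \<eta> * (norm d)\<^sup>2"
  shows "Lq + \<beta> * \<alpha>\<^sup>2 / (2 * \<eta> * (1 - \<beta>)) * (norm d)\<^sup>2 + (1 - C) * \<alpha>\<^sup>2 / \<eta> * (norm d)\<^sup>2
           \<le> Lp + \<beta> / (2 * \<eta> * (1 - \<beta>)) * (norm e)\<^sup>2"
proof -
  define \<kappa> where "\<kappa> = \<eta> * (1 - \<beta>)"
  have \<kappa>: "0 < \<kappa>"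
    using beta eta by (simp add: \<kappa>_def)
  have G_d: "\<kappa> * inner G d = \<beta> * inner e d - (norm d)\<^sup>2"
    using arg_cong[OF step, of "\<lambda>v. inner v d"]
    by (simp add: \<kappa>_def inner_diff_left power2_norm_eq_inner algebra_simps)
  \<comment> \<open>The momentum term is absorbed by expanding the square of the norm of e minus alpha d.\<close>
  have square: "0 \<le> \<beta> * (norm e)\<^sup>2 - 2 * \<alpha> * (\<beta> * inner e d) + \<beta> * (\<alpha>\<^sup>2 * (norm d)\<^sup>2)"
  proof -
    have "0 \<le> \<beta> * (norm (e - \<alpha> *\<^sub>R d))\<^sup>2"
      using beta by simp
    also have "\<dots> = \<beta> * (norm e)\<^sup>2 - 2 * \<alpha> * (\<beta> * inner e d) + \<beta> * (\<alpha>\<^sup>2 * (norm d)\<^sup>2)"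
      unfolding power2_norm_eq_inner
      by (simp add: inner_diff_left inner_diff_right inner_commute[of d e] power2_eq_square algebra_simps)
    finally show ?thesis .
  qed
  have alpha_sq: "\<alpha>\<^sup>2 * (norm d)\<^sup>2 \<le> \<alpha> * (norm d)\<^sup>2"
    using alpha by (simp add: power2_eq_square mult_left_le_one_le mult_right_mono)
  have "2 * \<kappa> * (\<alpha> * inner G d + \<alpha>\<^sup>2 / \<eta> * (norm d)\<^sup>2) + \<beta> * (\<alpha>\<^sup>2 * (norm d)\<^sup>2)
      = 2 * \<alpha> * (\<kappa> * inner G d) + 2 * (1 - \<beta>) * (\<alpha>\<^sup>2 * (norm d)\<^sup>2) + \<beta> * (\<alpha>\<^sup>2 * (norm d)\<^sup>2)"
    using eta by (simp add: \<kappa>_def field_simps)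
  also have "\<dots> \<le> \<beta> * (norm e)\<^sup>2"
    unfolding G_d using square alpha_sq beta by (simp add: algebra_simps)
  finally have scaled: "2 * \<kappa> * (\<alpha> * inner G d + \<alpha>\<^sup>2 / \<eta> * (norm d)\<^sup>2) + \<beta> * (\<alpha>\<^sup>2 * (norm d)\<^sup>2)
      \<le> \<beta> * (norm e)\<^sup>2" .
  have "\<alpha> * inner G d + \<alpha>\<^sup>2 / \<eta> * (norm d)\<^sup>2 + \<beta> * \<alpha>\<^sup>2 / (2 * \<kappa>) * (norm d)\<^sup>2
      = (2 * \<kappa> * (\<alpha> * inner G d + \<alpha>\<^sup>2 / \<eta> * (norm d)\<^sup>2) + \<beta> * (\<alpha>\<^sup>2 * (norm d)\<^sup>2)) / (2 * \<kappa>)"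
    using \<kappa> by (simp add: field_simps)
  also have "\<dots> \<le> \<beta> / (2 * \<kappa>) * (norm e)\<^sup>2"
    using divide_right_mono[OF scaled, of "2 * \<kappa>"] \<kappa> by simp
  finally have "\<alpha> * inner G d + \<alpha>\<^sup>2 / \<eta> * (norm d)\<^sup>2 + \<beta> * \<alpha>\<^sup>2 / (2 * \<kappa>) * (norm d)\<^sup>2
      \<le> \<beta> / (2 * \<kappa>) * (norm e)\<^sup>2" .
  moreover have "C * \<alpha>\<^sup>2 / \<eta> * (norm d)\<^sup>2 + (1 - C) * \<alpha>\<^sup>2 / \<eta> * (norm d)\<^sup>2 = \<alpha>\<^sup>2 / \<eta> * (norm d)\<^sup>2"
    using eta by (simp add: field_simps)
  ultimately show ?thesis
    using descent by (simp add: \<kappa>_def)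
qed

lemma affine_constraints_on_unit_interval:
  fixes a b :: "'i \<Rightarrow> real"
  assumes I: "finite I" and start: "\<And>i. i \<in> I \<Longrightarrow> c \<le> a i"
    and not_tight: "\<And>\<alpha> i. 0 \<le> \<alpha> \<Longrightarrow> \<alpha> \<le> 1 \<Longrightarrow> (\<forall>j\<in>I. c \<le> a j + \<alpha> * b j)
        \<Longrightarrow> i \<in> I \<Longrightarrow> b i < 0 \<Longrightarrow> c < a i + \<alpha> * b i"
    and alpha: "0 \<le> \<alpha>" "\<alpha> \<le> 1" and i: "i \<in> I"
  shows "c \<le> a i + \<alpha> * b i"
proof -
  have between: "c \<le> a k + t * b k" if "c \<le> a k" "c \<le> a k + b k" "0 \<le> t" "t \<le> 1" for k t
  proof -
    have "t * c \<le> t * (a k + b k)" "(1 - t) * c \<le> (1 - t) * a k"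
      using that by (simp_all add: mult_left_mono)
    then show ?thesis
      by (simp add: algebra_simps)
  qed
  have "\<forall>j\<in>I. c \<le> a j + b j"
  proof (rule ccontr)
    define J where "J = {j\<in>I. a j + b j < c}"
    define r where "r j = (a j - c) / (- b j)" for j
    assume "\<not> (\<forall>j\<in>I. c \<le> a j + b j)"
    then have J: "finite J" "J \<noteq> {}"
      using I by (auto simp: J_def)
    have b_neg: "b j < 0" and r: "0 \<le> r j" "r j < 1" if "j \<in> J" for j
      using that start[of j] by (auto simp: J_def r_def field_simps)
    \<comment> \<open>The first crossing of the level c along the segment.\<close>
    define \<alpha>' where "\<alpha>' = Min (r ` J)"
    have "\<alpha>' \<in> r ` J"
      using J by (simp add: \<alpha>'_def)
    then obtain j where j: "j \<in> J" "\<alpha>' = r j"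
      by blast
    have \<alpha>': "0 \<le> \<alpha>'" "\<alpha>' \<le> 1"
      using r[OF j(1)] j(2) by auto
    have "c \<le> a k + \<alpha>' * b k" if k: "k \<in> I" for k
    proof (cases "k \<in> J")
      case True
      then have "\<alpha>' \<le> r k"
        using J by (simp add: \<alpha>'_def)
      then show ?thesis
        using b_neg[OF True] by (simp add: r_def field_simps)
    next
      case False
      then show ?thesis
        using k start[of k] \<alpha>' by (intro between) (auto simp: J_def)
    qed
    moreover have "a j + \<alpha>' * b j = c"
      using j b_neg[of j] by (simp add: r_def field_simps)
    ultimately show False
      using not_tight[OF \<alpha>'] j b_neg[of j] by (auto simp: J_def)
  qed
  then show ?thesis
    using alpha i start[of i] by (intro between) auto
qed

lemma step_size_factor_less_1:
  fixes K \<eta> :: real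
  assumes "0 \<le> K" and "0 < \<eta>" and "0 < N" and "\<eta> < 2 * real N / K"
  shows "K / (2 * real N) * \<eta> < 1"
proof -
  \<comment> \<open>K = 0 is excluded by the step-size bound, which would read \<eta> < 0 since division by 0 yields 0.\<close>
  have "0 < K"
    using assms by (cases "K = 0") auto
  then have "\<eta> * K < 2 * real N"
    using assms(4) by (simp add: pos_less_divide_eq)
  then show ?thesis
    using assms(3) by (simp add: field_simps)
qed

locale momentum_descent =
  fixes x :: "nat \<Rightarrow> 'a::euclidean_space" and N :: nat and l :: "real \<Rightarrow> real"
    and \<beta> \<eta> s0 H :: real and w m :: "nat \<Rightarrow> 'a"
  assumes N_pos: "0 < N"
    and l_diff: "\<And>s. l differentiable (at s)"
    and l_pos: "\<And>s. 0 < l s"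
    and deriv_l_neg: "\<And>s. deriv l s < 0"
    and deriv_l_lipschitz: "\<And>a b. s0 \<le> a \<Longrightarrow> s0 \<le> b \<Longrightarrow> \<bar>deriv l a - deriv l b\<bar> \<le> H * \<bar>a - b\<bar>"
    and l_s0: "l s0 = real N * emp_loss l x N (w 1)"
    and beta: "0 \<le> \<beta>" "\<beta> < 1"
    and eta_pos: "0 < \<eta>"
    and C1_less_1: "(sigma_max x N)\<^sup>2 * H / (2 * real N) * \<eta> < 1"
    and m0: "m 0 = 0"
    and m_step: "\<And>t. 1 \<le> t \<Longrightarrow> m t = \<beta> *\<^sub>R m (t - 1) + (1 - \<beta>) *\<^sub>R gradient (emp_loss l x N) (w t)"
    and w_step: "\<And>t. 1 \<le> t \<Longrightarrow> w (t + 1) = w t - \<eta> *\<^sub>R m t"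
    and w0: "w 0 = w 1"
begin

abbreviation loss :: "'a \<Rightarrow> real" where
  "loss \<equiv> emp_loss l x N"

definition C1 :: real where
  "C1 = (sigma_max x N)\<^sup>2 * H / (2 * real N) * \<eta>"

definition energy :: "nat \<Rightarrow> real" where
  "energy t = loss (w t) + \<beta> / (2 * \<eta> * (1 - \<beta>)) * (norm (w t - w (t - 1)))\<^sup>2"

lemma H_nonneg: "0 \<le> H"
  using deriv_l_lipschitz[of "s0 + 1" s0] by simp

lemma l_strict_antimono:
  assumes "a < b"
  shows "l b < l a"
proof (rule DERIV_neg_imp_decreasing[OF assms])
  fix z
  have "DERIV l z :> deriv l z"
    using l_diff DERIV_deriv_iff_real_differentiable by blast
  then show "\<exists>y. DERIV l z :> y \<and> y < 0"
    using deriv_l_neg by blast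
qed

lemma margin_ge_s0:
  assumes "loss v \<le> loss (w 1)" and "i < N"
  shows "s0 \<le> inner v (x i)"
proof (rule ccontr)
  assume "\<not> s0 \<le> inner v (x i)"
  then have "l s0 < l (inner v (x i))"
    by (simp add: l_strict_antimono)
  also have "\<dots> \<le> real N * loss v"
    using l_pos \<open>i < N\<close> by (intro emp_loss_term_le less_imp_le)
  also have "\<dots> \<le> l s0"
    using assms(1) by (simp add: l_s0 mult_left_mono)
  finally show False by simp
qed

lemma margin_gt_s0:
  assumes "loss v < loss (w 1)" and "i < N"
  shows "s0 < inner v (x i)"
proof (rule ccontr)
  assume "\<not> s0 < inner v (x i)"
  then have "l s0 \<le> l (inner v (x i))"
    using l_strict_antimono[of "inner v (x i)" s0] by (cases "inner v (x i) = s0") auto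
  also have "\<dots> \<le> real N * loss v"
    using l_pos \<open>i < N\<close> by (intro emp_loss_term_le less_imp_le)
  also have "\<dots> < l s0"
    using assms(1) N_pos by (simp add: l_s0)
  finally show False by simp
qed

lemma heavy_ball_step:
  assumes "1 \<le> t"
  shows "w (t + 1) - w t = \<beta> *\<^sub>R (w t - w (t - 1)) - (\<eta> * (1 - \<beta>)) *\<^sub>R gradient loss (w t)"
proof -
  have prev: "\<eta> *\<^sub>R m (t - 1) = w (t - 1) - w t"
  proof (cases "t = 1")
    case False
    then have "w t = w (t - 1) - \<eta> *\<^sub>R m (t - 1)"
      using w_step[of "t - 1"] assms by simp
    then show ?thesis by simp
  qed (simp add: m0 w0)
  have "w (t + 1) - w t = - (\<beta> *\<^sub>R (\<eta> *\<^sub>R m (t - 1))) - (\<eta> * (1 - \<beta>)) *\<^sub>R gradient loss (w t)"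
    using w_step[OF assms] m_step[OF assms] by (simp add: scaleR_add_right)
  then show ?thesis
    unfolding prev by (simp add: scaleR_diff_right)
qed

lemma energy_bound_if_margins_ge_s0:
  assumes t: "1 \<le> t" and alpha: "0 \<le> \<alpha>" "\<alpha> \<le> 1"
    and p: "\<And>i. i < N \<Longrightarrow> s0 \<le> inner (w t) (x i)"
    and q: "\<And>i. i < N \<Longrightarrow> s0 \<le> inner (w t + \<alpha> *\<^sub>R (w (t + 1) - w t)) (x i)"
  shows "loss (w t + \<alpha> *\<^sub>R (w (t + 1) - w t))
           + \<beta> * \<alpha>\<^sup>2 / (2 * \<eta> * (1 - \<beta>)) * (norm (w (t + 1) - w t))\<^sup>2
           + (1 - C1) * \<alpha>\<^sup>2 / \<eta> * (norm (w (t + 1) - w t))\<^sup>2 \<le> energy t"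
proof -
  let ?d = "w (t + 1) - w t" and ?G = "gradient loss (w t)"
  have "loss (w t + \<alpha> *\<^sub>R ?d) \<le> loss (w t) + inner ?G (\<alpha> *\<^sub>R ?d)
      + (sigma_max x N)\<^sup>2 * H / (2 * real N) * (norm (\<alpha> *\<^sub>R ?d))\<^sup>2"
    using emp_loss_descent[OF l_diff deriv_l_lipschitz H_nonneg p q] by simp
  also have "\<dots> = loss (w t) + \<alpha> * inner ?G ?d + C1 * \<alpha>\<^sup>2 / \<eta> * (norm ?d)\<^sup>2"
    using eta_pos by (simp add: C1_def power_mult_distrib)
  finally show ?thesis
    using momentum_step_energy_bound[OF beta eta_pos alpha heavy_ball_step[OF t]]
    by (simp add: energy_def)
qed

lemma boundary_margin_nondecreasing:
  assumes t: "1 \<le> t" and energy: "energy t \<le> loss (w 1)"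
    and i: "i < N" and boundary: "inner (w t) (x i) = s0"
  shows "0 \<le> inner (w (t + 1) - w t) (x i)"
proof -
  let ?e = "w t - w (t - 1)" and ?G = "gradient loss (w t)"
  have momentum_nonneg: "0 \<le> \<beta> / (2 * \<eta> * (1 - \<beta>)) * (norm ?e)\<^sup>2"
    using beta eta_pos by simp
  have "l s0 \<le> real N * loss (w t)"
    using emp_loss_term_le[of l i N "w t" x] l_pos i boundary by (simp add: less_imp_le)
  then have "loss (w 1) \<le> loss (w t)"
    using N_pos by (simp add: l_s0)
  moreover have "loss (w t) \<le> loss (w 1)"
    using energy momentum_nonneg unfolding energy_def by linarith
  ultimately have "\<beta> / (2 * \<eta> * (1 - \<beta>)) * (norm ?e)\<^sup>2 = 0"
    using energy momentum_nonneg unfolding energy_def by linarith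
  then have no_momentum: "\<beta> *\<^sub>R ?e = 0"
    using beta eta_pos by auto
  have "real N * loss (w t) \<le> l (inner (w t) (x i))"
    using \<open>loss (w t) \<le> loss (w 1)\<close> by (simp add: boundary l_s0 mult_left_mono)
  then have "inner ?G (x i) \<le> 0"
    using l_diff l_pos deriv_l_neg i by (simp add: inner_gradient_emp_loss_nonpos less_imp_le)
  moreover have "inner (w (t + 1) - w t) (x i) = - ((\<eta> * (1 - \<beta>)) * inner ?G (x i))"
    unfolding heavy_ball_step[OF t] inner_diff_left no_momentum by simp
  ultimately show ?thesis
    using beta eta_pos by (simp add: mult_nonneg_nonpos)
qed

lemma margins_along_step_ge_s0:
  assumes t: "1 \<le> t" and energy: "energy t \<le> loss (w 1)"
    and alpha: "0 \<le> \<alpha>" "\<alpha> \<le> 1" and i: "i < N"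
  shows "s0 \<le> inner (w t + \<alpha> *\<^sub>R (w (t + 1) - w t)) (x i)"
proof -
  let ?d = "w (t + 1) - w t"
  have "loss (w t) \<le> energy t"
    using beta eta_pos by (simp add: energy_def)
  then have start: "s0 \<le> inner (w t) (x j)" if "j < N" for j
    using energy that by (intro margin_ge_s0) auto
  have "s0 \<le> inner (w t) (x i) + \<alpha> * inner ?d (x i)"
  proof (rule affine_constraints_on_unit_interval[where I = "{..<N}"])
    fix \<alpha>' j
    assume \<alpha>': "0 \<le> \<alpha>'" "\<alpha>' \<le> 1"
      and inside: "\<forall>k\<in>{..<N}. s0 \<le> inner (w t) (x k) + \<alpha>' * inner ?d (x k)"
      and j: "j \<in> {..<N}" and decreasing: "inner ?d (x j) < 0"
    show "s0 < inner (w t) (x j) + \<alpha>' * inner ?d (x j)"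
    proof (cases "\<alpha>' = 0")
      case True
      \<comment> \<open>Here the energy estimate gives no strict decrease; the sign of the gradient decides.\<close>
      have "inner (w t) (x j) \<noteq> s0"
        using boundary_margin_nondecreasing[OF t energy, of j] j decreasing by force
      then show ?thesis
        using start[of j] j True by simp
    next
      case False
      have "?d \<noteq> 0"
        using decreasing by auto
      then have "0 < (1 - C1) * \<alpha>'\<^sup>2 / \<eta> * (norm ?d)\<^sup>2"
        using False C1_less_1 eta_pos by (simp add: C1_def)
      moreover have "0 \<le> \<beta> * \<alpha>'\<^sup>2 / (2 * \<eta> * (1 - \<beta>)) * (norm ?d)\<^sup>2"
        using beta eta_pos by simp
      moreover have "loss (w t + \<alpha>' *\<^sub>R ?d)
          + \<beta> * \<alpha>'\<^sup>2 / (2 * \<eta> * (1 - \<beta>)) * (norm ?d)\<^sup>2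
          + (1 - C1) * \<alpha>'\<^sup>2 / \<eta> * (norm ?d)\<^sup>2 \<le> energy t"
        using inside by (intro energy_bound_if_margins_ge_s0[OF t \<alpha>' start]) (simp_all add: inner_add_left)
      ultimately have "loss (w t + \<alpha>' *\<^sub>R ?d) < loss (w 1)"
        using energy by linarith
      from margin_gt_s0[OF this, of j] j show ?thesis
        by (simp add: inner_add_left)
    qed
  qed (use start alpha i in auto)
  then show ?thesis
    by (simp add: inner_add_left)
qed

lemma energy_decrease_if_le_initial:
  assumes "1 \<le> t" and "energy t \<le> loss (w 1)"
  shows "energy (t + 1) + (1 - C1) / \<eta> * (norm (w (t + 1) - w t))\<^sup>2 \<le> energy t"
  using energy_bound_if_margins_ge_s0[OF assms(1), of 1] margins_along_step_ge_s0[OF assms, of 0] margins_along_step_ge_s0[OF assms, of 1]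
  by (simp add: energy_def)

lemma energy_le_initial: "1 \<le> t \<Longrightarrow> energy t \<le> loss (w 1)"
proof (induction t rule: nat_induct_at_least)
  case base
  then show ?case by (simp add: energy_def w0)
next
  case (Suc t)
  have "0 \<le> (1 - C1) / \<eta> * (norm (w (t + 1) - w t))\<^sup>2"
    using C1_less_1 eta_pos by (simp add: C1_def)
  then show ?case
    using energy_decrease_if_le_initial[OF Suc.hyps Suc.IH] Suc.IH by simp
qed

lemma energy_bound_along_step:
  assumes "1 \<le> t" and "0 \<le> \<alpha>" and "\<alpha> \<le> 1"
  shows "loss (w t + \<alpha> *\<^sub>R (w (t + 1) - w t))
           + \<beta> * \<alpha>\<^sup>2 / (2 * \<eta> * (1 - \<beta>)) * (norm (w (t + 1) - w t))\<^sup>2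
           + (1 - C1) * \<alpha>\<^sup>2 / \<eta> * (norm (w (t + 1) - w t))\<^sup>2 \<le> energy t"
  using margins_along_step_ge_s0[OF assms(1) energy_le_initial[OF assms(1)], of 0]
    margins_along_step_ge_s0[OF assms(1) energy_le_initial[OF assms(1)], of \<alpha>] assms
  by (intro energy_bound_if_margins_ge_s0) auto

lemma energy_decrease:
  "1 \<le> t \<Longrightarrow> energy (t + 1) + (1 - C1) / \<eta> * (norm (w (t + 1) - w t))\<^sup>2 \<le> energy t"
  by (rule energy_decrease_if_le_initial[OF _ energy_le_initial])

end

theorem lemma1:
  fixes x :: "nat \<Rightarrow> 'a::euclidean_space"
    and N :: nat
    and l :: "real \<Rightarrow> real"
    and \<beta> \<eta> :: real
    and w m :: "nat \<Rightarrow> 'a"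
  assumes N_pos: "N > 0"
    \<comment> \<open>A1: linear separability\<close>
    and A1: "\<exists>u. \<forall>i<N. inner u (x i) > 0"
    \<comment> \<open>A2\<close>
    and A2_diff: "\<forall>s. l differentiable (at s)"
    and A2_neg: "\<forall>s. deriv l s < 0"
    and A2_lim: "(l \<longlongrightarrow> 0) at_top"
    and A2_dlim: "(deriv l \<longlongrightarrow> 0) at_top"
    and A2_limsup: "Limsup at_bot (\<lambda>s. ereal (deriv l s)) < 0"
    and A2_upper: "\<exists>\<mu>p xp. \<mu>p > 0 \<and> xp > 0 \<and>
        (\<forall>s>xp. - deriv l s \<le> (1 + exp (- \<mu>p * s)) * exp (- s))"
    and A2_lower: "\<exists>\<mu>m xm. \<mu>m > 0 \<and> xm > 0 \<and>
        (\<forall>s>xm. - deriv l s \<ge> (1 - exp (- \<mu>m * s)) * exp (- s))"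
    and A2_bij: "bij_betw l UNIV {0<..}"
    \<comment> \<open>A3(D): l' is Lipschitz on every half-line [s0, infinity)\<close>
    and A3: "\<forall>s0. \<exists>H. \<forall>a b. a \<ge> s0 \<longrightarrow> b \<ge> s0 \<longrightarrow> \<bar>deriv l a - deriv l b\<bar> \<le> H * \<bar>a - b\<bar>"
    \<comment> \<open>step sizes\<close>
    and beta: "0 \<le> \<beta>" "\<beta> < 1"
    and eta_pos: "0 < \<eta>"
    and eta_small: "\<eta> < 2 * real N /
        ((sigma_max x N)\<^sup>2 * lip_const l (inv l (real N * emp_loss l x N (w 1))))"
    \<comment> \<open>GDM iterates, with the convention w(0) = w(1)\<close>
    and m0: "m 0 = 0"
    and m_step: "\<forall>t\<ge>1. m t = \<beta> *\<^sub>R m (t - 1) + (1 - \<beta>) *\<^sub>R gradient (emp_loss l x N) (w t)"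
    and w_step: "\<forall>t\<ge>1. w (t + 1) = w t - \<eta> *\<^sub>R m t"
    and w0: "w 0 = w 1"
  shows "let s0 = inv l (real N * emp_loss l x N (w 1));
             C1 = (sigma_max x N)\<^sup>2 * lip_const l s0 / (2 * real N) * \<eta>;
             \<xi> = (\<lambda>t. emp_loss l x N (w t) + \<beta> / (2 * \<eta> * (1 - \<beta>)) * (norm (w t - w (t - 1)))\<^sup>2)
         in (\<forall>t\<ge>1. \<forall>\<alpha>\<in>{0..1}.
               \<xi> t \<ge> emp_loss l x N (w t + \<alpha> *\<^sub>R (w (t + 1) - w t))
                     + \<beta> * \<alpha>\<^sup>2 / (2 * \<eta> * (1 - \<beta>)) * (norm (w (t + 1) - w t))\<^sup>2
                     + (1 - C1) * \<alpha>\<^sup>2 / \<eta> * (norm (w (t + 1) - w t))\<^sup>2)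
          \<and> (\<forall>t\<ge>1. \<xi> t \<ge> \<xi> (t + 1) + (1 - C1) / \<eta> * (norm (w (t + 1) - w t))\<^sup>2)"
proof -
  define s0 where "s0 = inv l (real N * emp_loss l x N (w 1))"
  have l_pos: "0 < l s" for s
    using A2_bij by (auto simp: bij_betw_def)
  have "0 < real N * emp_loss l x N (w 1)"
    using N_pos l_pos by (simp add: emp_loss_def) (intro sum_pos, auto)
  then have l_s0: "l s0 = real N * emp_loss l x N (w 1)"
    using A2_bij unfolding s0_def bij_betw_def by (auto intro: f_inv_into_f)
  have "0 \<le> (sigma_max x N)\<^sup>2 * lip_const l s0"
    using A3 by (simp add: lip_const_nonneg)
  then have step_size: "(sigma_max x N)\<^sup>2 * lip_const l s0 / (2 * real N) * \<eta> < 1"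
    using eta_small eta_pos N_pos by (intro step_size_factor_less_1) (simp_all add: s0_def)
  have lipschitz: "\<bar>deriv l a - deriv l b\<bar> \<le> lip_const l s0 * \<bar>a - b\<bar>" if "s0 \<le> a" "s0 \<le> b" for a b
    using that by (rule lip_const_lipschitz[OF spec[OF A3]])
  interpret momentum_descent x N l \<beta> \<eta> s0 "lip_const l s0" w m
    by unfold_locales
      (fact N_pos A2_diff[rule_format] l_pos A2_neg[rule_format] lipschitz l_s0 beta eta_pos
        step_size m0 m_step[rule_format] w_step[rule_format] w0)+
  show ?thesis
    unfolding Let_def s0_def[symmetric] C1_def[symmetric] energy_def[symmetric]
    by (intro conjI allI impI ballI energy_decrease energy_bound_along_step) auto
qed

end
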